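(* Let $m\geq 3$ be an integer. Let $H$ be the graph obtained from $C_m[4]$ by adding, for each vertex $x$ of $C_m$, all six edges among the four vertices $(x,0),(x,1),(x,2),(x,3)$ (so that these four vertices induce a $K_4$). Then there exists a perfect matching $I$ of $C_m[4]$ such that the edge set of $H-I$ can be partitioned into two $C_4$-factors and three $C_m$-factors.
   Context: For a graph $G$ and a positive integer $k$, $G[k]$ is the graph with vertex set $V(G)\times\{0,1,\dots,k-1\}$ in which $(u,i)$ and $(w,j)$ are adjacent if and only if $uw\in E(G)$. $C_m$ is the cycle of length $m$. A perfect matching (1-factor) is a set of pairwise disjoint edges covering all vertices. A $C_k$-factor of a graph is a spanning subgraph each of whose components is a cycle of length $k$. $H-I$ denotes $H$ with the edges of $I$ removed. *)

theory Defs
  imports Main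
begin

definition cycle_graph_V :: "nat \<Rightarrow> nat set" where
  "cycle_graph_V m = {0..<m}"

definition cycle_graph_E :: "nat \<Rightarrow> nat set set" where
  "cycle_graph_E m = {{x, (x + 1) mod m} | x. x < m}"

definition lex_V :: "'a set \<Rightarrow> nat \<Rightarrow> ('a \<times> nat) set" where
  "lex_V V k = V \<times> {0..<k}"

definition lex_E :: "'a set set \<Rightarrow> nat \<Rightarrow> ('a \<times> nat) set set" where
  "lex_E E k = {{(u, i), (w, j)} | u w i j. {u, w} \<in> E \<and> i < k \<and> j < k}"

definition H_E :: "nat \<Rightarrow> (nat \<times> nat) set set" where
  "H_E m = lex_E (cycle_graph_E m) 4 \<union>
     {{(x, i), (x, j)} | x i j. x < m \<and> i < 4 \<and> j < 4 \<and> i \<noteq> j}"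

definition perfect_matching :: "'a set \<Rightarrow> 'a set set \<Rightarrow> 'a set set \<Rightarrow> bool" where
  "perfect_matching V E I \<longleftrightarrow> I \<subseteq> E \<and> (\<forall>v\<in>V. \<exists>!e. e \<in> I \<and> v \<in> e)"

definition is_cycle :: "nat \<Rightarrow> 'a set set \<Rightarrow> bool" where
  "is_cycle k C \<longleftrightarrow> 3 \<le> k \<and>
     (\<exists>f :: nat \<Rightarrow> 'a. inj_on f {0..<k} \<and> C = {{f i, f ((i + 1) mod k)} | i. i < k})"

definition cycle_factor :: "nat \<Rightarrow> 'a set \<Rightarrow> 'a set set \<Rightarrow> 'a set set \<Rightarrow> bool" where
  "cycle_factor k V E F \<longleftrightarrow> F \<subseteq> E \<and>
     (\<exists>\<C>. (\<forall>C\<in>\<C>. is_cycle k C) \<and>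
          (\<forall>C\<in>\<C>. \<forall>D\<in>\<C>. C \<noteq> D \<longrightarrow> \<Union>C \<inter> \<Union>D = {}) \<and>
          \<Union>(\<Union>\<C>) = V \<and> F = \<Union>\<C>)"

end

theory Submission
  imports Defs
begin

text \<open>
  Write the vertices of H as (x, a) with x in Z_m and level a in Z_4. An edge of H either lies
  inside a fibre {x} x Z_4, or joins (x, a) to (x + 1, b) and then has jump b - a.
  The matching I consists of the jump-2 edges leaving levels 2 and 3. One C_4-factor is formed by
  the 4-cycles 0-2-1-3 inside the fibres, the other by the 4-cycles (x,0) (x,1) (x+1,3) (x+1,2),
  which use the remaining fibre edges and the remaining jump-2 edges.
  For a potential h : Z_m -> Z_4, the edges whose jump at x is h (x + 1) - h x form the four
  m-cycles x |-> (x, i + h x), i.e. a C_m-factor. It therefore suffices to find three potentials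
  whose jumps at every x are 0, 1 and 3 in some order.
\<close>

section \<open>Cycle factors and perfect matchings from bijections\<close>

definition cycle_edges :: "nat \<Rightarrow> (nat \<Rightarrow> 'a) \<Rightarrow> 'a set set" where
  "cycle_edges k f = {{f i, f ((i + 1) mod k)} | i. i < k}"

lemma is_cycle_iff: "is_cycle k C \<longleftrightarrow> 3 \<le> k \<and> (\<exists>f. inj_on f {0..<k} \<and> C = cycle_edges k f)"
  unfolding is_cycle_def cycle_edges_def ..

lemma cycle_edges_eq_image: "cycle_edges k f = (\<lambda>i. {f i, f ((i + 1) mod k)}) ` {..<k}"
  unfolding cycle_edges_def by auto

lemma cycle_edges_4: "cycle_edges 4 g = {{g 0, g 1}, {g 1, g 2}, {g 2, g 3}, {g 3, g 0}}"
proof -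
  have "{..<4::nat} = {0, 1, 2, 3}" by auto
  moreover have "(0::nat) + 1 = 1" "(1::nat) + 1 = 2" "((2::nat) + 1) mod 4 = 3" "((3::nat) + 1) mod 4 = 0"
    by simp_all
  ultimately show ?thesis
    unfolding cycle_edges_eq_image by (simp only: image_insert image_empty mod_less)
qed

lemma Union_cycle_edges:
  assumes "0 < k"
  shows "\<Union>(cycle_edges k f) = f ` {0..<k}"
proof
  show "\<Union>(cycle_edges k f) \<subseteq> f ` {0..<k}"
    using assms by (auto simp: cycle_edges_def)
  show "f ` {0..<k} \<subseteq> \<Union>(cycle_edges k f)"
  proof
    fix v assume "v \<in> f ` {0..<k}"
    then obtain i where "i < k" "v = f i" by auto
    then have "{f i, f ((i + 1) mod k)} \<in> cycle_edges k f" "v \<in> {f i, f ((i + 1) mod k)}"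
      by (auto simp: cycle_edges_def)
    then show "v \<in> \<Union>(cycle_edges k f)" by blast
  qed
qed

lemma inj_on_slice:
  assumes "inj_on (\<lambda>(j, i). f j i) (J \<times> A)" "j \<in> J"
  shows "inj_on (f j) A"
  using assms by (auto simp: inj_on_def)

lemma slice_images_disjoint:
  assumes "inj_on (\<lambda>(j, i). f j i) (J \<times> A)" "j \<in> J" "j' \<in> J" "j \<noteq> j'"
  shows "f j ` A \<inter> f j' ` A = {}"
proof -
  have "f j i \<noteq> f j' i'" if "i \<in> A" "i' \<in> A" for i i'
    using inj_onD[OF assms(1), of "(j, i)" "(j', i')"] that assms(2-4) by auto
  then show ?thesis by blast
qed

lemma cycle_factor_of_bij:
  assumes k: "3 \<le> k"
    and bij: "bij_betw (\<lambda>(j, i). f j i) (J \<times> {0..<k}) V"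
    and F: "F = (\<Union>j\<in>J. cycle_edges k (f j))"
    and "F \<subseteq> E"
  shows "cycle_factor k V E F"
proof -
  define \<C> where "\<C> = (\<lambda>j. cycle_edges k (f j)) ` J"
  have inj: "inj_on (\<lambda>(j, i). f j i) (J \<times> {0..<k})"
    using bij by (rule bij_betw_imp_inj_on)
  have verts: "\<Union>(cycle_edges k (f j)) = f j ` {0..<k}" for j
    using k by (intro Union_cycle_edges) simp
  have "is_cycle k (cycle_edges k (f j))" if "j \<in> J" for j
    unfolding is_cycle_iff using k inj_on_slice[OF inj that] by blast
  then have "\<forall>C\<in>\<C>. is_cycle k C"
    unfolding \<C>_def by blast
  moreover have "\<Union>(cycle_edges k (f j)) \<inter> \<Union>(cycle_edges k (f j')) = {}"
    if "j \<in> J" "j' \<in> J" "j \<noteq> j'" for j j'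
    unfolding verts using slice_images_disjoint[OF inj that] .
  then have "\<forall>C\<in>\<C>. \<forall>D\<in>\<C>. C \<noteq> D \<longrightarrow> \<Union>C \<inter> \<Union>D = {}"
    unfolding \<C>_def by blast
  moreover have "\<Union>(\<Union>\<C>) = V"
  proof -
    have "\<Union>(\<Union>\<C>) = (\<Union>j\<in>J. \<Union>(cycle_edges k (f j)))"
      unfolding \<C>_def by blast
    also have "\<dots> = (\<Union>j\<in>J. f j ` {0..<k})"
      by (simp only: verts)
    also have "\<dots> = (\<lambda>(j, i). f j i) ` (J \<times> {0..<k})"
      by auto
    finally show ?thesis
      using bij by (simp add: bij_betw_def)
  qed
  moreover have "F = \<Union>\<C>"
    by (simp add: F \<C>_def)
  ultimately show ?thesis
    using \<open>F \<subseteq> E\<close> unfolding cycle_factor_def by blast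
qed

lemma perfect_matching_of_bij:
  fixes f :: "'j \<Rightarrow> nat \<Rightarrow> 'a"
  assumes bij: "bij_betw (\<lambda>(j, i). f j i) (J \<times> {0..<2}) V"
    and I: "I = (\<lambda>j. {f j 0, f j 1}) ` J"
    and "I \<subseteq> E"
  shows "perfect_matching V E I"
proof -
  have inj: "inj_on (\<lambda>(j, i). f j i) (J \<times> {0..<2})"
    using bij by (rule bij_betw_imp_inj_on)
  have V: "V = (\<lambda>(j, i). f j i) ` (J \<times> {0..<2})"
    using bij by (simp add: bij_betw_def)
  have unique: "\<exists>!e. e \<in> I \<and> v \<in> e" if "v \<in> V" for v
  proof -
    from that obtain j i where ji: "j \<in> J" "i < 2" "v = f j i"
      unfolding V by auto
    have "{f j 0, f j 1} \<in> I"
      using ji(1) I by blast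
    moreover have "v \<in> {f j 0, f j 1}"
      using ji(2,3) by (auto simp: less_2_cases_iff)
    moreover have "e = {f j 0, f j 1}" if e: "e \<in> I" "v \<in> e" for e
    proof -
      from e(1) I obtain j' where j': "j' \<in> J" "e = {f j' 0, f j' 1}"
        by blast
      have "f j i = f j' 0 \<or> f j i = f j' 1"
        using e(2) unfolding j'(2) ji(3) by simp
      then have "j = j'"
        using inj_onD[OF inj, of "(j, i)" "(j', 0)"] inj_onD[OF inj, of "(j, i)" "(j', 1)"] ji j'
        by auto
      with j' show ?thesis by simp
    qed
    ultimately show ?thesis by blast
  qed
  with \<open>I \<subseteq> E\<close> show ?thesis
    unfolding perfect_matching_def by blast
qed

section \<open>Arithmetic modulo m and modulo 4\<close>

lemma Suc_mod_inj: "x < m \<Longrightarrow> y < m \<Longrightarrow> Suc x mod m = Suc y mod m \<Longrightarrow> x = y"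
  by (auto simp: mod_Suc split: if_splits)

lemma bij_betw_Suc_mod:
  assumes "0 < m"
  shows "bij_betw (\<lambda>x. Suc x mod m) {0..<m} {0..<m}"
proof -
  have inj: "inj_on (\<lambda>x. Suc x mod m) {0..<m}"
    by (rule inj_onI) (auto intro: Suc_mod_inj)
  moreover have "(\<lambda>x. Suc x mod m) ` {0..<m} = {0..<m}"
    using assms inj by (intro endo_inj_surj) (auto simp: image_subset_iff)
  ultimately show ?thesis
    unfolding bij_betw_def ..
qed

lemma ex_Suc_mod_eq:
  assumes "0 < m" "y < m"
  shows "\<exists>x<m. Suc x mod m = y"
proof -
  have "y \<in> (\<lambda>x. Suc x mod m) ` {0..<m}"
    using bij_betw_Suc_mod[OF assms(1)] assms(2) by (simp add: bij_betw_def)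
  then show ?thesis by auto
qed

lemma Suc_mod_neq: "2 \<le> m \<Longrightarrow> x < m \<Longrightarrow> Suc x mod m \<noteq> x"
  by (cases "Suc x < m") (auto simp: mod_Suc)

lemma Suc_Suc_mod_neq: "3 \<le> m \<Longrightarrow> x < m \<Longrightarrow> Suc (Suc x mod m) mod m \<noteq> x"
  by (cases "Suc x < m"; cases "Suc (Suc x) < m") (auto simp: mod_Suc)

lemma less_4_cases: "n < (4::nat) \<Longrightarrow> n = 0 \<or> n = 1 \<or> n = 2 \<or> n = 3"
  by auto

definition jump :: "nat \<Rightarrow> nat \<Rightarrow> nat" where
  "jump a b = nat ((int b - int a) mod 4)"

lemma int_jump: "int (jump a b) = (int b - int a) mod 4"
  by (simp add: jump_def)

lemma jump_less: "jump a b < 4"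
  by (simp add: jump_def nat_less_iff)

lemma jump_add_mod: "(jump p c + p) mod 4 = c mod 4"
proof -
  have "int ((jump p c + p) mod 4) = ((int c - int p) mod 4 + int p) mod 4"
    by (simp add: int_jump zmod_int)
  also have "\<dots> = int (c mod 4)"
    by (simp add: mod_add_left_eq zmod_int)
  finally show ?thesis
    by (simp only: of_nat_eq_iff)
qed

lemma jump_shift: "jump ((i + a) mod 4) ((i + b) mod 4) = jump a b"
proof -
  have "(int ((i + b) mod 4) - int ((i + a) mod 4)) mod 4 = ((int i + int b) - (int i + int a)) mod 4"
    by (simp add: zmod_int mod_diff_eq)
  then show ?thesis
    by (simp add: jump_def)
qed

lemma jump_eq_shift:
  assumes "jump a b = jump p q"
  shows "(jump p a + q) mod 4 = b mod 4"
proof -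
  have "4 dvd ((int b - int a) - (int q - int p))"
    using assms by (metis int_jump mod_eq_dvd_iff)
  moreover have "(int a - int p + int q) - int b = - ((int b - int a) - (int q - int p))"
    by simp
  ultimately have "(int a - int p + int q) mod 4 = int b mod 4"
    by (simp only: mod_eq_dvd_iff dvd_minus_iff)
  then have "int ((jump p a + q) mod 4) = int (b mod 4)"
    by (simp add: int_jump zmod_int mod_add_left_eq)
  then show ?thesis
    by (simp only: of_nat_eq_iff)
qed

lemma jump_eq_2_iff:
  assumes "a < 4" "b < 4"
  shows "jump a b = 2 \<longleftrightarrow> b = (a + 2) mod 4"
  using less_4_cases[OF assms(1)] less_4_cases[OF assms(2)] by (elim disjE) (simp_all add: jump_def)

lemma add_mod_cancel_less:
  fixes i i' t n :: nat
  assumes "i < n" "i' < n" "(i + t) mod n = (i' + t) mod n"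
  shows "i = i'"
proof -
  have "i mod n = i' mod n"
    using assms(3) nat_mod_eq_iff by auto
  with assms(1,2) show ?thesis by simp
qed

section \<open>Edges of H\<close>

definition cross_edge :: "nat \<Rightarrow> nat \<Rightarrow> nat \<Rightarrow> nat \<Rightarrow> (nat \<times> nat) set" where
  "cross_edge m x a b = {(x, a), (Suc x mod m, b)}"

text \<open>Fibre edges are selected through their unordered pair of levels, so that the laws below
  need no symmetry hypothesis.\<close>

definition H_edges ::
  "nat \<Rightarrow> (nat \<Rightarrow> nat \<Rightarrow> nat \<Rightarrow> bool) \<Rightarrow> (nat set \<Rightarrow> bool) \<Rightarrow> (nat \<times> nat) set set" where
  "H_edges m P Q =
     {cross_edge m x a b | x a b. x < m \<and> a < 4 \<and> b < 4 \<and> P x a b} \<union>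
     {{(x, a), (x, b)} | x a b. x < m \<and> a < 4 \<and> b < 4 \<and> a \<noteq> b \<and> Q {a, b}}"

lemma lex_V_eq: "lex_V (cycle_graph_V m) 4 = {0..<m} \<times> {0..<4}"
  unfolding lex_V_def cycle_graph_V_def by simp

lemma lex_E_cycle_graph_eq:
  "lex_E (cycle_graph_E m) 4 = {cross_edge m x a b | x a b. x < m \<and> a < 4 \<and> b < 4}"
proof
  show "lex_E (cycle_graph_E m) 4 \<subseteq> {cross_edge m x a b | x a b. x < m \<and> a < 4 \<and> b < 4}"
  proof
    fix e assume "e \<in> lex_E (cycle_graph_E m) 4"
    then obtain u w i j where e: "e = {(u, i), (w, j)}" "i < 4" "j < 4"
      and "{u, w} \<in> cycle_graph_E m"
      unfolding lex_E_def by auto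
    then obtain x where "x < m" and uw: "{u, w} = {x, Suc x mod m}"
      unfolding cycle_graph_E_def by auto
    from uw have "e = cross_edge m x i j \<or> e = cross_edge m x j i"
      unfolding e cross_edge_def by (auto simp: doubleton_eq_iff insert_commute)
    with e \<open>x < m\<close> show "e \<in> {cross_edge m x a b | x a b. x < m \<and> a < 4 \<and> b < 4}"
      by blast
  qed
  have "cross_edge m x a b \<in> lex_E (cycle_graph_E m) 4" if "x < m" "a < 4" "b < 4" for x a b
  proof -
    have "{x, Suc x mod m} \<in> cycle_graph_E m"
      using that(1) unfolding cycle_graph_E_def by auto
    with that(2,3) show ?thesis
      unfolding lex_E_def cross_edge_def by blast
  qed
  then show "{cross_edge m x a b | x a b. x < m \<and> a < 4 \<and> b < 4} \<subseteq> lex_E (cycle_graph_E m) 4"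
    by blast
qed

lemma H_E_eq_H_edges: "H_E m = H_edges m (\<lambda>_ _ _. True) (\<lambda>_. True)"
  unfolding H_E_def H_edges_def lex_E_cycle_graph_eq by simp

lemma H_edges_without_fibres_subset: "H_edges m P (\<lambda>_. False) \<subseteq> lex_E (cycle_graph_E m) 4"
  unfolding H_edges_def lex_E_cycle_graph_eq by blast

lemma cross_edge_eq_iff:
  assumes "3 \<le> m" "x < m"
  shows "cross_edge m x a b = cross_edge m y c d \<longleftrightarrow> x = y \<and> a = c \<and> b = d"
  unfolding cross_edge_def using Suc_Suc_mod_neq[OF assms] by (auto simp: doubleton_eq_iff)

lemma cross_edge_neq_fibre_edge:
  assumes "3 \<le> m" "x < m"
  shows "cross_edge m x a b \<noteq> {(y, c), (y, d)}"
  unfolding cross_edge_def using Suc_mod_neq[of m x] assms by (auto simp: doubleton_eq_iff)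

lemma H_edges_cases:
  assumes "e \<in> H_edges m P Q"
  obtains (cross) x a b where "e = cross_edge m x a b" "x < m" "a < 4" "b < 4" "P x a b"
    | (fibre) x a b where "e = {(x, a), (x, b)}" "x < m" "a < 4" "b < 4" "a \<noteq> b" "Q {a, b}"
  using assms unfolding H_edges_def by blast

lemma cross_edge_in_H_edges_iff:
  assumes "3 \<le> m" "x < m" "a < 4" "b < 4"
  shows "cross_edge m x a b \<in> H_edges m P Q \<longleftrightarrow> P x a b"
proof
  assume "cross_edge m x a b \<in> H_edges m P Q"
  then show "P x a b"
  proof (cases rule: H_edges_cases)
    case (cross y c d)
    then show ?thesis using cross_edge_eq_iff[OF assms(1,2)] by simp
  next
    case (fibre y c d)
    then show ?thesis using cross_edge_neq_fibre_edge[OF assms(1,2)] by simp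
  qed
qed (use assms in \<open>auto simp: H_edges_def\<close>)

lemma fibre_edge_in_H_edges_iff:
  assumes "3 \<le> m" "x < m" "a < 4" "b < 4" "a \<noteq> b"
  shows "{(x, a), (x, b)} \<in> H_edges m P Q \<longleftrightarrow> Q {a, b}"
proof
  assume "{(x, a), (x, b)} \<in> H_edges m P Q"
  then show "Q {a, b}"
  proof (cases rule: H_edges_cases)
    case (cross y c d)
    then show ?thesis using cross(1)[symmetric] cross_edge_neq_fibre_edge[OF assms(1) cross(2)] by blast
  next
    case (fibre y c d)
    then have "{a, b} = {c, d}" by (auto simp: doubleton_eq_iff)
    with fibre show ?thesis by simp
  qed
qed (use assms in \<open>unfold H_edges_def, blast\<close>)

lemma fibre_edge_in_H_edges:
  "3 \<le> m \<Longrightarrow> x < m \<Longrightarrow> a < 4 \<Longrightarrow> b < 4 \<Longrightarrow> a \<noteq> b \<Longrightarrow> Q {a, b} \<Longrightarrow>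
    {(x, a), (x, b)} \<in> H_edges m P Q"
  using fibre_edge_in_H_edges_iff by blast

lemma H_edges_Int:
  assumes m: "3 \<le> m"
  shows "H_edges m P Q \<inter> H_edges m P' Q' =
    H_edges m (\<lambda>x a b. P x a b \<and> P' x a b) (\<lambda>S. Q S \<and> Q' S)"
    (is "_ = ?R")
proof (intro equalityI subsetI)
  fix e assume e: "e \<in> H_edges m P Q \<inter> H_edges m P' Q'"
  then have "e \<in> H_edges m P Q" by blast
  then show "e \<in> ?R"
  proof (cases rule: H_edges_cases)
    case (cross x a b)
    with e show ?thesis
      by (simp add: cross_edge_in_H_edges_iff[OF m])
  next
    case (fibre x a b)
    with e show ?thesis
      by (simp add: fibre_edge_in_H_edges_iff[OF m])
  qed
next
  fix e assume "e \<in> ?R"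
  then show "e \<in> H_edges m P Q \<inter> H_edges m P' Q'"
  proof (cases rule: H_edges_cases)
    case (cross x a b)
    then show ?thesis
      by (simp add: cross_edge_in_H_edges_iff[OF m])
  next
    case (fibre x a b)
    then show ?thesis
      by (simp add: fibre_edge_in_H_edges_iff[OF m])
  qed
qed

lemma H_edges_UN:
  "(\<Union>i\<in>A. H_edges m (P i) (Q i)) = H_edges m (\<lambda>x a b. \<exists>i\<in>A. P i x a b) (\<lambda>S. \<exists>i\<in>A. Q i S)"
  unfolding H_edges_def by blast

lemma H_edges_cong:
  assumes "\<And>x a b. x < m \<Longrightarrow> a < 4 \<Longrightarrow> b < 4 \<Longrightarrow> P x a b \<longleftrightarrow> P' x a b"
    and "\<And>a b. a < 4 \<Longrightarrow> b < 4 \<Longrightarrow> a \<noteq> b \<Longrightarrow> Q {a, b} \<longleftrightarrow> Q' {a, b}"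
  shows "H_edges m P Q = H_edges m P' Q'"
  unfolding H_edges_def using assms by blast

lemma H_edges_empty: "H_edges m (\<lambda>_ _ _. False) (\<lambda>_. False) = {}"
  by (simp add: H_edges_def)

section \<open>The five factors and the matching\<close>

lemma fibre_C4_factor:
  fixes m :: nat
  defines "F \<equiv> H_edges m (\<lambda>_ _ _. False) (\<lambda>S. S \<notin> {{0, 1}, {2, 3}})"
  assumes m: "3 \<le> m" and "F \<subseteq> E"
  shows "cycle_factor 4 (lex_V (cycle_graph_V m) 4) E F"
proof (rule cycle_factor_of_bij)
  let ?f = "\<lambda>x i. (x, [0, 2, 1, 3] ! i)"
  have "bij_betw (map_prod id ((!) [0, 2, 1, 3])) ({0..<m} \<times> {0..<4}) ({0..<m} \<times> {0..<4::nat})"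
    by (intro bij_betw_map_prod bij_betw_id bij_betw_nth) auto
  then show "bij_betw (\<lambda>(x, i). ?f x i) ({0..<m} \<times> {0..<4}) (lex_V (cycle_graph_V m) 4)"
    by (simp add: lex_V_eq map_prod_def)
  let ?C = "\<lambda>x. {{(x, 0), (x, 2)}, {(x, 2), (x, 1)}, {(x, 1), (x, 3)}, {(x, 3), (x, 0::nat)}}"
  have "F = (\<Union>x\<in>{0..<m}. ?C x)"
  proof (intro equalityI subsetI)
    fix e assume e: "e \<in> F"
    obtain x a b where e: "e = {(x, a), (x, b)}" "x < m" "a < 4" "b < 4" "a \<noteq> b"
        "{a, b} \<notin> {{0, 1}, {2, 3}}"
      using e unfolding F_def by (cases rule: H_edges_cases) auto
    then have "{a, b} \<in> {{0, 2}, {2, 1}, {1, 3}, {3, 0}}"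
      using less_4_cases[of a] less_4_cases[of b] by (auto simp: doubleton_eq_iff)
    then have "e \<in> ?C x"
      unfolding e(1) by (auto simp: doubleton_eq_iff)
    with e(2) show "e \<in> (\<Union>x\<in>{0..<m}. ?C x)"
      by (intro UN_I[of x]) simp_all
  next
    fix e assume "e \<in> (\<Union>x\<in>{0..<m}. ?C x)"
    then obtain x where "x < m" "e \<in> ?C x"
      by auto
    then show "e \<in> F"
      unfolding F_def using fibre_edge_in_H_edges[OF m] by (auto simp: doubleton_eq_iff)
  qed
  then show "F = (\<Union>x\<in>{0..<m}. cycle_edges 4 (?f x))"
    by (simp add: cycle_edges_4)
qed (use assms in auto)

definition straddling_vertex :: "nat \<Rightarrow> nat \<Rightarrow> nat \<Rightarrow> nat \<times> nat" where
  "straddling_vertex m x i = (if i < 2 then x else Suc x mod m, [0, 1, 3, 2] ! i)"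

lemma bij_betw_straddling_vertex:
  assumes m: "3 \<le> m"
  shows "bij_betw (\<lambda>(x, i). straddling_vertex m x i) ({0..<m} \<times> {0..<4}) ({0..<m} \<times> {0..<4})"
proof -
  let ?f = "straddling_vertex m"
  have "x = y \<and> i = j" if xi: "x < m" "i < 4" "y < m" "j < 4" "?f x i = ?f y j" for x i y j
  proof -
    have "i = j"
      using xi less_4_cases[of i] less_4_cases[of j] by (auto simp: straddling_vertex_def)
    with xi show ?thesis
      by (cases "i < 2") (auto simp: straddling_vertex_def dest: Suc_mod_inj)
  qed
  then have "inj_on (\<lambda>(x, i). ?f x i) ({0..<m} \<times> {0..<4})"
    by (intro inj_onI) auto
  moreover have "(\<lambda>(x, i). ?f x i) ` ({0..<m} \<times> {0..<4}) = {0..<m} \<times> {0..<4}"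
  proof (intro equalityI subsetI)
    fix v assume "v \<in> (\<lambda>(x, i). ?f x i) ` ({0..<m} \<times> {0..<4})"
    then show "v \<in> {0..<m} \<times> {0..<4}"
      using m by (auto simp: straddling_vertex_def dest!: less_4_cases)
  next
    fix v assume "v \<in> {0..<m} \<times> {0..<4::nat}"
    then obtain y c where v: "v = (y, c)" "y < m" "c < 4" by auto
    show "v \<in> (\<lambda>(x, i). ?f x i) ` ({0..<m} \<times> {0..<4})"
    proof (cases "c < 2")
      case True
      then have "v = ?f y c"
        using v less_2_cases[of c] by (auto simp: straddling_vertex_def)
      with v show ?thesis by force
    next
      case False
      obtain x where x: "x < m" "Suc x mod m = y"
        using ex_Suc_mod_eq[of m y] m v(2) by auto
      then have "v = ?f x (5 - c)"
        using v False less_4_cases[of c] by (auto simp: straddling_vertex_def)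
      with x(1) False v(3) show ?thesis by force
    qed
  qed
  ultimately show ?thesis
    by (simp add: bij_betw_def)
qed

lemma cycle_edges_straddling_vertex:
  "cycle_edges 4 (straddling_vertex m x) =
     {{(x, 0), (x, 1)}, cross_edge m x 1 3, {(Suc x mod m, 3), (Suc x mod m, 2)}, cross_edge m x 0 2}"
  by (simp add: cycle_edges_4 straddling_vertex_def cross_edge_def insert_commute)

lemma straddling_edges_eq:
  assumes m: "3 \<le> m"
  shows "H_edges m (\<lambda>_ a b. jump a b = 2 \<and> a < 2) (\<lambda>S. S \<in> {{0, 1}, {2, 3}}) =
    (\<Union>x\<in>{0..<m}. cycle_edges 4 (straddling_vertex m x))"
    (is "?F = _")
proof (intro equalityI subsetI)
  fix e assume "e \<in> ?F"
  then show "e \<in> (\<Union>x\<in>{0..<m}. cycle_edges 4 (straddling_vertex m x))"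
  proof (cases rule: H_edges_cases)
    case (cross x a b)
    then have "a = 0 \<and> b = 2 \<or> a = 1 \<and> b = 3"
      using jump_eq_2_iff[of a b] less_2_cases[of a] by auto
    with cross show ?thesis
      by (intro UN_I[of x]) (auto simp: cycle_edges_straddling_vertex)
  next
    case (fibre y a b)
    then consider "{a, b} = {0, 1}" | "{a, b} = {2, 3}" by auto
    then show ?thesis
    proof cases
      case 1
      with fibre show ?thesis
        by (intro UN_I[of y]) (auto simp: cycle_edges_straddling_vertex doubleton_eq_iff)
    next
      case 2
      obtain x where "x < m" "Suc x mod m = y"
        using ex_Suc_mod_eq[of m y] m fibre(2) by auto
      with 2 fibre show ?thesis
        by (intro UN_I[of x]) (auto simp: cycle_edges_straddling_vertex doubleton_eq_iff)
    qed
  qed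
next
  fix e assume "e \<in> (\<Union>x\<in>{0..<m}. cycle_edges 4 (straddling_vertex m x))"
  then obtain x where x: "x < m" "e \<in> cycle_edges 4 (straddling_vertex m x)"
    by auto
  have "Suc x mod m < m" using m by simp
  moreover have "cross_edge m x 1 3 \<in> ?F" "cross_edge m x 0 2 \<in> ?F"
    using x(1) m by (simp_all add: cross_edge_in_H_edges_iff jump_def)
  moreover have "{(x, 0), (x, 1)} \<in> ?F" "{(Suc x mod m, 3), (Suc x mod m, 2)} \<in> ?F"
    using x(1) calculation(1) by (auto intro!: fibre_edge_in_H_edges[OF m] simp: doubleton_eq_iff)
  ultimately show "e \<in> ?F"
    using x(2) unfolding cycle_edges_straddling_vertex by blast
qed

lemma straddling_C4_factor:
  fixes m :: nat
  defines "F \<equiv> H_edges m (\<lambda>_ a b. jump a b = 2 \<and> a < 2) (\<lambda>S. S \<in> {{0, 1}, {2, 3}})"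
  assumes m: "3 \<le> m" and "F \<subseteq> E"
  shows "cycle_factor 4 (lex_V (cycle_graph_V m) 4) E F"
  using bij_betw_straddling_vertex[OF m] straddling_edges_eq[OF m] assms
  by (intro cycle_factor_of_bij) (simp_all add: lex_V_eq)

definition matching_vertex :: "nat \<Rightarrow> nat \<times> nat \<Rightarrow> nat \<Rightarrow> nat \<times> nat" where
  "matching_vertex m j i = (if i = 0 then (fst j, snd j + 2) else (Suc (fst j) mod m, snd j))"

lemma bij_betw_matching_vertex:
  assumes m: "3 \<le> m"
  shows "bij_betw (\<lambda>(j, i). matching_vertex m j i) (({0..<m} \<times> {0..<2}) \<times> {0..<2})
    ({0..<m} \<times> {0..<4})"
proof -
  let ?f = "matching_vertex m" and ?A = "({0..<m} \<times> {0..<2}) \<times> {0..<2::nat}"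
  have "(x, c) = (y, d) \<and> i = j"
    if "x < m" "c < 2" "i < 2" "y < m" "d < 2" "j < 2" "?f (x, c) i = ?f (y, d) j" for x c i y d j
    using that less_2_cases[of i] less_2_cases[of j]
    by (auto simp: matching_vertex_def dest: Suc_mod_inj)
  then have "inj_on (\<lambda>(j, i). ?f j i) ?A"
    by (intro inj_onI) auto
  moreover have "(\<lambda>(j, i). ?f j i) ` ?A = {0..<m} \<times> {0..<4}"
  proof (intro equalityI subsetI)
    fix v assume "v \<in> (\<lambda>(j, i). ?f j i) ` ?A"
    then show "v \<in> {0..<m} \<times> {0..<4}"
      using m by (auto simp: matching_vertex_def)
  next
    fix v assume "v \<in> {0..<m} \<times> {0..<4::nat}"
    then obtain y c where v: "v = (y, c)" "y < m" "c < 4" by auto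
    show "v \<in> (\<lambda>(j, i). ?f j i) ` ?A"
    proof (cases "c < 2")
      case True
      obtain x where "x < m" "Suc x mod m = y"
        using ex_Suc_mod_eq[of m y] m v(2) by auto
      with True v have "v = ?f (x, c) 1" "((x, c), 1) \<in> ?A"
        by (simp_all add: matching_vertex_def)
      then show ?thesis by force
    next
      case False
      with v have "v = ?f (y, c - 2) 0" "((y, c - 2), 0) \<in> ?A"
        by (simp_all add: matching_vertex_def)
      then show ?thesis by force
    qed
  qed
  ultimately show ?thesis
    by (simp add: bij_betw_def)
qed

lemma matching_edges_eq:
  assumes m: "3 \<le> m"
  shows "H_edges m (\<lambda>_ a b. jump a b = 2 \<and> 2 \<le> a) (\<lambda>_. False) =
    (\<lambda>j. {matching_vertex m j 0, matching_vertex m j 1}) ` ({0..<m} \<times> {0..<2})"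
    (is "?I = _")
proof -
  have "{matching_vertex m j 0, matching_vertex m j 1} = cross_edge m (fst j) (snd j + 2) (snd j)" for j
    by (simp add: matching_vertex_def cross_edge_def)
  moreover have "?I = (\<lambda>(x, c). cross_edge m x (c + 2) c) ` ({0..<m} \<times> {0..<2})"
  proof (intro equalityI subsetI)
    fix e assume "e \<in> ?I"
    then show "e \<in> (\<lambda>(x, c). cross_edge m x (c + 2) c) ` ({0..<m} \<times> {0..<2})"
    proof (cases rule: H_edges_cases)
      case (cross x a b)
      then have "a = b + 2" "b < 2"
        using jump_eq_2_iff[of a b] less_4_cases[of a] by auto
      with cross show ?thesis by force
    qed simp
  next
    fix e assume "e \<in> (\<lambda>(x, c). cross_edge m x (c + 2) c) ` ({0..<m} \<times> {0..<2})"
    then obtain x c where "e = cross_edge m x (c + 2) c" "x < m" "c < 2"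
      by auto
    then show "e \<in> ?I"
      using m jump_eq_2_iff[of "c + 2" c] by (simp add: cross_edge_in_H_edges_iff)
  qed
  ultimately show ?thesis
    by (auto simp: image_def)
qed

lemma matching_perfect:
  fixes m :: nat
  defines "I \<equiv> H_edges m (\<lambda>_ a b. jump a b = 2 \<and> 2 \<le> a) (\<lambda>_. False)"
  assumes m: "3 \<le> m"
  shows "perfect_matching (lex_V (cycle_graph_V m) 4) (lex_E (cycle_graph_E m) 4) I"
proof (rule perfect_matching_of_bij)
  show "bij_betw (\<lambda>(j, i). matching_vertex m j i) (({0..<m} \<times> {0..<2}) \<times> {0..<2})
      (lex_V (cycle_graph_V m) 4)"
    using bij_betw_matching_vertex[OF m] by (simp add: lex_V_eq)
  show "I = (\<lambda>j. {matching_vertex m j 0, matching_vertex m j 1}) ` ({0..<m} \<times> {0..<2})"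
    unfolding I_def by (rule matching_edges_eq[OF m])
  show "I \<subseteq> lex_E (cycle_graph_E m) 4"
    unfolding I_def by (rule H_edges_without_fibres_subset)
qed

definition twisted_edges :: "nat \<Rightarrow> (nat \<Rightarrow> nat) \<Rightarrow> (nat \<times> nat) set set" where
  "twisted_edges m h = H_edges m (\<lambda>x a b. jump a b = jump (h x) (h (Suc x mod m))) (\<lambda>_. False)"

definition twisted_vertex :: "(nat \<Rightarrow> nat) \<Rightarrow> nat \<Rightarrow> nat \<Rightarrow> nat \<times> nat" where
  "twisted_vertex h j x = (x, (j + h x) mod 4)"

lemma bij_betw_twisted_vertex:
  "bij_betw (\<lambda>(j, x). twisted_vertex h j x) ({0..<4} \<times> {0..<m}) ({0..<m} \<times> {0..<4})"
proof -
  have "inj_on (\<lambda>(j, x). twisted_vertex h j x) ({0..<4} \<times> {0..<m})"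
    by (intro inj_onI) (auto simp: twisted_vertex_def dest: add_mod_cancel_less)
  moreover have "(\<lambda>(j, x). twisted_vertex h j x) ` ({0..<4} \<times> {0..<m}) = {0..<m} \<times> {0..<4}"
  proof (intro equalityI subsetI)
    fix v assume "v \<in> (\<lambda>(j, x). twisted_vertex h j x) ` ({0..<4} \<times> {0..<m})"
    then show "v \<in> {0..<m} \<times> {0..<4}"
      by (auto simp: twisted_vertex_def)
  next
    fix v assume "v \<in> {0..<m} \<times> {0..<4::nat}"
    then obtain x c where v: "v = (x, c)" "x < m" "c < 4" by auto
    then have "v = twisted_vertex h (jump (h x) c) x"
      by (simp add: twisted_vertex_def jump_add_mod)
    with v(2) jump_less show "v \<in> (\<lambda>(j, x). twisted_vertex h j x) ` ({0..<4} \<times> {0..<m})"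
      by force
  qed
  ultimately show ?thesis
    by (simp add: bij_betw_def)
qed

lemma twisted_edges_eq:
  assumes m: "3 \<le> m"
  shows "twisted_edges m h = (\<Union>j\<in>{0..<4}. cycle_edges m (twisted_vertex h j))"
proof -
  have edge: "{twisted_vertex h j x, twisted_vertex h j (Suc x mod m)} =
      cross_edge m x ((j + h x) mod 4) ((j + h (Suc x mod m)) mod 4)" for j x
    by (simp add: twisted_vertex_def cross_edge_def)
  show ?thesis
  proof (intro equalityI subsetI)
    fix e assume "e \<in> twisted_edges m h"
    then obtain x a b where e: "e = cross_edge m x a b" "x < m" "a < 4" "b < 4"
      and ab: "jump a b = jump (h x) (h (Suc x mod m))"
      unfolding twisted_edges_def by (cases rule: H_edges_cases) auto
    define j where "j = jump (h x) a"
    have "a = (j + h x) mod 4" "b = (j + h (Suc x mod m)) mod 4"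
      using e(3,4) jump_add_mod[of "h x" a] jump_eq_shift[OF ab] by (simp_all add: j_def)
    with e(1,2) have "e \<in> cycle_edges m (twisted_vertex h j)"
      by (auto simp: cycle_edges_eq_image edge)
    then show "e \<in> (\<Union>j\<in>{0..<4}. cycle_edges m (twisted_vertex h j))"
      using jump_less[of "h x" a] by (auto simp: j_def)
  next
    fix e assume "e \<in> (\<Union>j\<in>{0..<4}. cycle_edges m (twisted_vertex h j))"
    then obtain j x where "x < m" "e = {twisted_vertex h j x, twisted_vertex h j (Suc x mod m)}"
      by (auto simp: cycle_edges_eq_image)
    then show "e \<in> twisted_edges m h"
      unfolding twisted_edges_def edge using m
      by (simp add: cross_edge_in_H_edges_iff jump_shift)
  qed
qed

lemma twisted_Cm_factor:
  assumes m: "3 \<le> m" and "twisted_edges m h \<subseteq> E"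
  shows "cycle_factor m (lex_V (cycle_graph_V m) 4) E (twisted_edges m h)"
  using bij_betw_twisted_vertex twisted_edges_eq[OF m] assms
  by (intro cycle_factor_of_bij) (simp_all add: lex_V_eq)

section \<open>Potentials and the edge colouring\<close>

text \<open>The potentials 0, x mod 2 and 3 (x mod 2) have jumps 0, 1, 3 or 0, 3, 1 at every x
  when m is even. For odd m the parity pattern breaks at the wrap-around, which is repaired by
  giving the last vertex the potentials 1, 0, 3.\<close>

definition potential :: "nat \<Rightarrow> nat \<Rightarrow> nat \<Rightarrow> nat" where
  "potential m k x =
     (if odd m \<and> x = m - 1 then (if k = 2 then 1 else if k = 3 then 0 else 3)
      else (if k = 2 then 0 else if k = 3 then x mod 2 else 3 * (x mod 2)))"

definition potential_jump :: "nat \<Rightarrow> nat \<Rightarrow> nat \<Rightarrow> nat" where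
  "potential_jump m k x = jump (potential m k x) (potential m k (Suc x mod m))"

lemma potential_regular:
  assumes "\<not> (odd m \<and> x = m - 1)"
  shows "potential m 2 x = 0" "potential m 3 x = x mod 2" "potential m 4 x = 3 * (x mod 2)"
  using assms by (simp_all add: potential_def)

lemma potential_last:
  assumes "odd m"
  shows "potential m 2 (m - 1) = 1" "potential m 3 (m - 1) = 0" "potential m 4 (m - 1) = 3"
  using assms by (simp_all add: potential_def)

lemma potential_jumps_last:
  assumes "3 \<le> m"
  shows "(potential_jump m 2 (m - 1), potential_jump m 3 (m - 1), potential_jump m 4 (m - 1)) =
    (if odd m then (3, 0, 1) else (0, 3, 1))"
proof -
  have succ: "Suc (m - 1) mod m = 0" and r0: "\<not> (odd m \<and> 0 = m - 1)"
    using assms by auto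
  show ?thesis
  proof (cases "odd m")
    case True
    then show ?thesis
      unfolding potential_jump_def succ using potential_last[OF True] potential_regular[OF r0]
      by (simp add: jump_def)
  next
    case False
    then have "(m - 1) mod 2 = 1" and r: "\<not> (odd m \<and> m - 1 = m - 1)"
      using assms by presburger+
    with False show ?thesis
      unfolding potential_jump_def succ using potential_regular[OF r] potential_regular[OF r0]
      by (simp add: jump_def)
  qed
qed

lemma potential_jumps_penultimate:
  assumes "3 \<le> m"
  shows "(potential_jump m 2 (m - 2), potential_jump m 3 (m - 2), potential_jump m 4 (m - 2)) =
    (if odd m then (1, 3, 0) else (0, 1, 3))"
proof -
  have succ: "Suc (m - 2) mod m = m - 1" and r: "\<not> (odd m \<and> m - 2 = m - 1)"
    using assms by auto
  show ?thesis
  proof (cases "odd m")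
    case True
    then have "(m - 2) mod 2 = 1"
      using assms by presburger
    with True show ?thesis
      unfolding potential_jump_def succ using potential_last[OF True] potential_regular[OF r]
      by (simp add: jump_def)
  next
    case False
    then have "(m - 2) mod 2 = 0" "(m - 1) mod 2 = 1" and r1: "\<not> (odd m \<and> m - 1 = m - 1)"
      using assms by presburger+
    with False show ?thesis
      unfolding potential_jump_def succ using potential_regular[OF r] potential_regular[OF r1]
      by (simp add: jump_def)
  qed
qed

lemma potential_jumps_inner:
  assumes "Suc (Suc x) < m"
  shows "(potential_jump m 2 x, potential_jump m 3 x, potential_jump m 4 x) =
    (if even x then (0, 1, 3) else (0, 3, 1))"
proof -
  have succ: "Suc x mod m = Suc x" and r: "\<not> (odd m \<and> x = m - 1)" "\<not> (odd m \<and> Suc x = m - 1)"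
    using assms by auto
  note potential_2 = potential_regular(1)[OF r(1)] potential_regular(1)[OF r(2)]
  show ?thesis
  proof (cases "even x")
    case True
    then have "potential m 3 x = 0" "potential m 4 x = 0"
      "potential m 3 (Suc x) = 1" "potential m 4 (Suc x) = 3"
      using potential_regular[OF r(1)] potential_regular[OF r(2)] by presburger+
    with True show ?thesis
      unfolding potential_jump_def succ using potential_2 by (simp add: jump_def)
  next
    case False
    then have "potential m 3 x = 1" "potential m 4 x = 3"
      "potential m 3 (Suc x) = 0" "potential m 4 (Suc x) = 0"
      using potential_regular[OF r(1)] potential_regular[OF r(2)] by presburger+
    with False show ?thesis
      unfolding potential_jump_def succ using potential_2 by (simp add: jump_def)
  qed
qed

lemma bij_betw_onto_013:
  assumes "(f 2, f 3, f 4) \<in> {(0, 1, 3), (0, 3, 1), (1, 3, 0), (3, 0, 1 :: nat)}"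
  shows "bij_betw f {2, 3, 4 :: nat} {0, 1, 3}"
  using assms by (auto simp: bij_betw_def)

lemma potential_jumps:
  assumes m: "3 \<le> m" and x: "x < m"
  shows "bij_betw (\<lambda>k. potential_jump m k x) {2, 3, 4} {0, 1, 3}"
proof (rule bij_betw_onto_013)
  consider "x = m - 1" | "x = m - 2" | "Suc (Suc x) < m"
    using x by linarith
  then show "(potential_jump m 2 x, potential_jump m 3 x, potential_jump m 4 x)
    \<in> {(0, 1, 3), (0, 3, 1), (1, 3, 0), (3, 0, 1)}"
    using potential_jumps_last[OF m] potential_jumps_penultimate[OF m] potential_jumps_inner[of x m]
    by cases auto
qed

text \<open>Colours 0 to 4 are the five factors, colour 5 is the matching.\<close>

definition cross_colour :: "nat \<Rightarrow> nat \<Rightarrow> nat \<Rightarrow> nat \<Rightarrow> nat \<Rightarrow> bool" where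
  "cross_colour m i x a b \<longleftrightarrow>
     (i = 1 \<and> jump a b = 2 \<and> a < 2) \<or>
     (i \<in> {2..4} \<and> jump a b = potential_jump m i x) \<or>
     (i = 5 \<and> jump a b = 2 \<and> 2 \<le> a)"

definition fibre_colour :: "nat \<Rightarrow> nat set \<Rightarrow> bool" where
  "fibre_colour i S \<longleftrightarrow> (i = 0 \<and> S \<notin> {{0, 1}, {2, 3}}) \<or> (i = 1 \<and> S \<in> {{0, 1}, {2, 3}})"

definition colour_class :: "nat \<Rightarrow> nat \<Rightarrow> (nat \<times> nat) set set" where
  "colour_class m i = H_edges m (cross_colour m i) (fibre_colour i)"

lemma cross_colour_unique:
  assumes "3 \<le> m" "x < m" "cross_colour m i x a b" "cross_colour m j x a b"
  shows "i = j"
proof -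
  let ?J = "\<lambda>k. potential_jump m k x"
  have "{2..4::nat} = {2, 3, 4}" by auto
  with potential_jumps[OF assms(1,2)] have bij: "bij_betw ?J {2..4} {0, 1, 3}"
    by simp
  have not_2: "?J k \<noteq> 2" if "k \<in> {2..4}" for k
    using bij_betw_apply[OF bij that] by auto
  show ?thesis
  proof (cases "jump a b = 2")
    case True
    have colour_2: "k = 1 \<and> a < 2 \<or> k = 5 \<and> 2 \<le> a" if "cross_colour m k x a b" for k
    proof -
      have "\<not> (k \<in> {2..4} \<and> jump a b = ?J k)"
        using True not_2[of k] by auto
      with that show ?thesis
        unfolding cross_colour_def by blast
    qed
    show ?thesis
      using colour_2[OF assms(3)] colour_2[OF assms(4)] by auto
  next
    case False
    with assms(3,4) have "i \<in> {2..4}" "j \<in> {2..4}" "?J i = ?J j"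
      unfolding cross_colour_def by auto
    then show ?thesis
      using inj_onD[OF bij_betw_imp_inj_on[OF bij]] by blast
  qed
qed

lemma cross_colour_exists:
  assumes "3 \<le> m" "x < m"
  shows "\<exists>i<6. cross_colour m i x a b"
proof (cases "jump a b = 2")
  case True
  show ?thesis
  proof (cases "a < 2")
    case True
    with \<open>jump a b = 2\<close> have "cross_colour m 1 x a b"
      by (simp add: cross_colour_def)
    then show ?thesis by (intro exI[of _ 1]) simp
  next
    case False
    with \<open>jump a b = 2\<close> have "cross_colour m 5 x a b"
      by (simp add: cross_colour_def)
    then show ?thesis by (intro exI[of _ 5]) simp
  qed
next
  case False
  let ?J = "\<lambda>k. potential_jump m k x"
  have "jump a b \<in> {0, 1, 3}"
    using False jump_less[of a b] by auto
  also have "{0, 1, 3} = ?J ` {2, 3, 4}"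
    using potential_jumps[OF assms] by (simp add: bij_betw_def)
  finally obtain k where "k \<in> {2, 3, 4}" "jump a b = ?J k"
    by blast
  then show ?thesis
    unfolding cross_colour_def by (intro exI[of _ k]) auto
qed

lemma colour_classes_disjoint:
  assumes m: "3 \<le> m" and "i \<noteq> j"
  shows "colour_class m i \<inter> colour_class m j = {}"
proof -
  have "colour_class m i \<inter> colour_class m j =
      H_edges m (\<lambda>x a b. cross_colour m i x a b \<and> cross_colour m j x a b)
        (\<lambda>S. fibre_colour i S \<and> fibre_colour j S)"
    unfolding colour_class_def by (rule H_edges_Int[OF m])
  also have "\<dots> = H_edges m (\<lambda>_ _ _. False) (\<lambda>_. False)"
  proof (rule H_edges_cong)
    show "cross_colour m i x a b \<and> cross_colour m j x a b \<longleftrightarrow> False" if "x < m" for x a b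
      using cross_colour_unique[OF m that, of i a b j] \<open>i \<noteq> j\<close> by blast
    show "fibre_colour i S \<and> fibre_colour j S \<longleftrightarrow> False" for S
      using \<open>i \<noteq> j\<close> by (auto simp: fibre_colour_def)
  qed
  finally show ?thesis
    by (simp add: H_edges_empty)
qed

lemma Union_colour_classes:
  assumes m: "3 \<le> m"
  shows "(\<Union>i<6. colour_class m i) = H_E m"
proof -
  have "(\<Union>i<6. colour_class m i) =
      H_edges m (\<lambda>x a b. \<exists>i\<in>{..<6}. cross_colour m i x a b) (\<lambda>S. \<exists>i\<in>{..<6}. fibre_colour i S)"
    unfolding colour_class_def by (rule H_edges_UN)
  also have "\<dots> = H_edges m (\<lambda>_ _ _. True) (\<lambda>_. True)"
  proof (rule H_edges_cong)
    show "(\<exists>i\<in>{..<6}. cross_colour m i x a b) \<longleftrightarrow> True" if "x < m" for x a b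
      using cross_colour_exists[OF m that] by auto
    show "(\<exists>i\<in>{..<6}. fibre_colour i S) \<longleftrightarrow> True" for S
    proof -
      have "fibre_colour (if S \<in> {{0, 1}, {2, 3}} then 1 else 0) S"
        by (simp add: fibre_colour_def)
      moreover have "(if S \<in> {{0, 1}, {2, 3}} then 1 else 0 :: nat) \<in> {..<6}"
        by simp
      ultimately show ?thesis by blast
    qed
  qed
  finally show ?thesis
    by (simp add: H_E_eq_H_edges)
qed

lemma Union_colour_classes_below_5:
  assumes m: "3 \<le> m"
  shows "(\<Union>i<5. colour_class m i) = H_E m - colour_class m 5"
proof -
  have "{..<6::nat} = insert 5 {..<5}" by auto
  then have "H_E m = colour_class m 5 \<union> (\<Union>i<5. colour_class m i)"
    using Union_colour_classes[OF m] by simp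
  moreover have "colour_class m 5 \<inter> colour_class m i = {}" if "i < 5" for i
    using colour_classes_disjoint[OF m, of 5 i] that by simp
  ultimately show ?thesis
    by blast
qed

lemma colour_class_0: "colour_class m 0 = H_edges m (\<lambda>_ _ _. False) (\<lambda>S. S \<notin> {{0, 1}, {2, 3}})"
  unfolding colour_class_def
  by (rule H_edges_cong) (simp_all add: cross_colour_def fibre_colour_def)

lemma colour_class_1:
  "colour_class m 1 = H_edges m (\<lambda>_ a b. jump a b = 2 \<and> a < 2) (\<lambda>S. S \<in> {{0, 1}, {2, 3}})"
  unfolding colour_class_def
  by (rule H_edges_cong) (simp_all add: cross_colour_def fibre_colour_def)

lemma colour_class_twisted:
  assumes "2 \<le> k" "k \<le> 4"
  shows "colour_class m k = twisted_edges m (potential m k)"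
  unfolding colour_class_def twisted_edges_def
  by (rule H_edges_cong) (use assms in \<open>simp_all add: cross_colour_def fibre_colour_def potential_jump_def\<close>)

lemma colour_class_5: "colour_class m 5 = H_edges m (\<lambda>_ a b. jump a b = 2 \<and> 2 \<le> a) (\<lambda>_. False)"
  unfolding colour_class_def
  by (rule H_edges_cong) (simp_all add: cross_colour_def fibre_colour_def)

lemma colour_class_perfect_matching:
  assumes "3 \<le> m"
  shows "perfect_matching (lex_V (cycle_graph_V m) 4) (lex_E (cycle_graph_E m) 4) (colour_class m 5)"
  unfolding colour_class_5 using assms by (rule matching_perfect)

lemma colour_class_C4_factor:
  assumes m: "3 \<le> m" and "i < 2" and sub: "colour_class m i \<subseteq> E"
  shows "cycle_factor 4 (lex_V (cycle_graph_V m) 4) E (colour_class m i)"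
proof -
  consider "i = 0" | "i = 1" using \<open>i < 2\<close> by linarith
  then show ?thesis
  proof cases
    case 1
    from sub show ?thesis
      unfolding 1 colour_class_0 by (rule fibre_C4_factor[OF m])
  next
    case 2
    from sub show ?thesis
      unfolding 2 colour_class_1 by (rule straddling_C4_factor[OF m])
  qed
qed

lemma colour_class_Cm_factor:
  assumes m: "3 \<le> m" and "2 \<le> i" "i \<le> 4" and sub: "colour_class m i \<subseteq> E"
  shows "cycle_factor m (lex_V (cycle_graph_V m) 4) E (colour_class m i)"
  using sub unfolding colour_class_twisted[OF assms(2,3)] by (rule twisted_Cm_factor[OF m])

theorem mainTheorem6:
  fixes m :: nat
  assumes "m \<ge> 3"
  shows "\<exists>I. perfect_matching (lex_V (cycle_graph_V m) 4) (lex_E (cycle_graph_E m) 4) I \<and>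
     (\<exists>F :: nat \<Rightarrow> (nat \<times> nat) set set.
        (\<forall>i<5. \<forall>j<5. i \<noteq> j \<longrightarrow> F i \<inter> F j = {}) \<and>
        (\<Union>i<5. F i) = H_E m - I \<and>
        (\<forall>i<2. cycle_factor 4 (lex_V (cycle_graph_V m) 4) (H_E m - I) (F i)) \<and>
        (\<forall>i\<in>{2..<5}. cycle_factor m (lex_V (cycle_graph_V m) 4) (H_E m - I) (F i)))"
proof (intro exI conjI)
  have m: "3 \<le> m" using assms .
  let ?I = "colour_class m 5" and ?F = "colour_class m"
  have union: "(\<Union>i<5. ?F i) = H_E m - ?I"
    by (rule Union_colour_classes_below_5[OF m])
  then have sub: "?F i \<subseteq> H_E m - ?I" if "i < 5" for i
    using that by blast
  show "perfect_matching (lex_V (cycle_graph_V m) 4) (lex_E (cycle_graph_E m) 4) ?I"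
    by (rule colour_class_perfect_matching[OF m])
  show "\<forall>i<5. \<forall>j<5. i \<noteq> j \<longrightarrow> ?F i \<inter> ?F j = {}"
    using colour_classes_disjoint[OF m] by blast
  show "(\<Union>i<5. ?F i) = H_E m - ?I" by (fact union)
  show "\<forall>i<2. cycle_factor 4 (lex_V (cycle_graph_V m) 4) (H_E m - ?I) (?F i)"
    using colour_class_C4_factor[OF m] sub by simp
  show "\<forall>i\<in>{2..<5}. cycle_factor m (lex_V (cycle_graph_V m) 4) (H_E m - ?I) (?F i)"
    using colour_class_Cm_factor[OF m] sub by simp
qed

end
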